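(* Let $G$ be a connected graph that is not isomorphic to a path. Let $u$ be a pendant vertex of $G$ adjacent to a cut-vertex $v$ with $\deg(v)=2$. Then $u$ is not a basis forced vertex of $G$.
   Context: All graphs are finite and simple. A pendant is a vertex with exactly one neighbour; a cut-vertex is a vertex $v$ such that $G-v$ is disconnected. For vertices $x,y$ of a connected graph $G$, $d(x,y)$ is the length of a shortest $x$–$y$ path. A set $R\subseteq V(G)$ is a resolving set if for all distinct $x,y\in V(G)$ there is $r\in R$ with $d(r,x)\neq d(r,y)$. The metric dimension $\dim(G)$ is the minimum cardinality of a resolving set, and a resolving set of cardinality $\dim(G)$ is a metric basis. A vertex is a basis forced vertex if it belongs to every metric basis of $G$. *)

theory Defs
  imports Main
begin

definition simple_graph :: "'a set \<Rightarrow> ('a \<Rightarrow> 'a \<Rightarrow> bool) \<Rightarrow> bool" where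
  "simple_graph V E \<longleftrightarrow> finite V \<and>
     (\<forall>x y. E x y \<longrightarrow> x \<in> V \<and> y \<in> V) \<and>
     (\<forall>x. \<not> E x x) \<and> (\<forall>x y. E x y \<longrightarrow> E y x)"

definition neighbours :: "'a set \<Rightarrow> ('a \<Rightarrow> 'a \<Rightarrow> bool) \<Rightarrow> 'a \<Rightarrow> 'a set" where
  "neighbours V E v = {w \<in> V. E v w}"

definition degree :: "'a set \<Rightarrow> ('a \<Rightarrow> 'a \<Rightarrow> bool) \<Rightarrow> 'a \<Rightarrow> nat" where
  "degree V E v = card (neighbours V E v)"

definition pendant :: "'a set \<Rightarrow> ('a \<Rightarrow> 'a \<Rightarrow> bool) \<Rightarrow> 'a \<Rightarrow> bool" where
  "pendant V E v \<longleftrightarrow> v \<in> V \<and> degree V E v = 1"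

definition is_walk :: "'a set \<Rightarrow> ('a \<Rightarrow> 'a \<Rightarrow> bool) \<Rightarrow> 'a list \<Rightarrow> bool" where
  "is_walk V E p \<longleftrightarrow> p \<noteq> [] \<and> set p \<subseteq> V \<and>
     (\<forall>i. Suc i < length p \<longrightarrow> E (p ! i) (p ! Suc i))"

definition walk_betw :: "'a set \<Rightarrow> ('a \<Rightarrow> 'a \<Rightarrow> bool) \<Rightarrow> 'a \<Rightarrow> 'a list \<Rightarrow> 'a \<Rightarrow> bool" where
  "walk_betw V E x p y \<longleftrightarrow> is_walk V E p \<and> hd p = x \<and> last p = y"

definition connected_graph :: "'a set \<Rightarrow> ('a \<Rightarrow> 'a \<Rightarrow> bool) \<Rightarrow> bool" where
  "connected_graph V E \<longleftrightarrow> V \<noteq> {} \<and> (\<forall>x\<in>V. \<forall>y\<in>V. \<exists>p. walk_betw V E x p y)"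

definition dist :: "'a set \<Rightarrow> ('a \<Rightarrow> 'a \<Rightarrow> bool) \<Rightarrow> 'a \<Rightarrow> 'a \<Rightarrow> nat" where
  "dist V E x y = (LEAST n. \<exists>p. walk_betw V E x p y \<and> length p = Suc n)"

definition delete_vertex :: "('a \<Rightarrow> 'a \<Rightarrow> bool) \<Rightarrow> 'a \<Rightarrow> 'a \<Rightarrow> 'a \<Rightarrow> bool" where
  "delete_vertex E v = (\<lambda>x y. E x y \<and> x \<noteq> v \<and> y \<noteq> v)"

definition cut_vertex :: "'a set \<Rightarrow> ('a \<Rightarrow> 'a \<Rightarrow> bool) \<Rightarrow> 'a \<Rightarrow> bool" where
  "cut_vertex V E v \<longleftrightarrow> v \<in> V \<and> \<not> connected_graph (V - {v}) (delete_vertex E v)"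

definition is_path_graph :: "'a set \<Rightarrow> ('a \<Rightarrow> 'a \<Rightarrow> bool) \<Rightarrow> bool" where
  "is_path_graph V E \<longleftrightarrow> (\<exists>n f. n \<ge> 1 \<and> bij_betw f {0..<n} V \<and>
     (\<forall>i<n. \<forall>j<n. E (f i) (f j) \<longleftrightarrow> (i = Suc j \<or> j = Suc i)))"

definition resolving_set :: "'a set \<Rightarrow> ('a \<Rightarrow> 'a \<Rightarrow> bool) \<Rightarrow> 'a set \<Rightarrow> bool" where
  "resolving_set V E R \<longleftrightarrow> R \<subseteq> V \<and>
     (\<forall>x\<in>V. \<forall>y\<in>V. x \<noteq> y \<longrightarrow> (\<exists>r\<in>R. dist V E r x \<noteq> dist V E r y))"

definition metric_dim :: "'a set \<Rightarrow> ('a \<Rightarrow> 'a \<Rightarrow> bool) \<Rightarrow> nat" where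
  "metric_dim V E = (LEAST k. \<exists>R. resolving_set V E R \<and> card R = k)"

definition metric_basis :: "'a set \<Rightarrow> ('a \<Rightarrow> 'a \<Rightarrow> bool) \<Rightarrow> 'a set \<Rightarrow> bool" where
  "metric_basis V E R \<longleftrightarrow> resolving_set V E R \<and> card R = metric_dim V E"

definition basis_forced :: "'a set \<Rightarrow> ('a \<Rightarrow> 'a \<Rightarrow> bool) \<Rightarrow> 'a \<Rightarrow> bool" where
  "basis_forced V E v \<longleftrightarrow> v \<in> V \<and> (\<forall>R. metric_basis V E R \<longrightarrow> v \<in> R)"

end

theory Submission
  imports Defs
begin

text \<open>Since u is a pendant vertex with neighbour v, d(u,x) = d(v,x) + 1 for every
  x \<noteq> u, so u and v distinguish the same pairs of vertices other than u. Take a metric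
  basis R containing u. If R \<subseteq> {u,v}, then u alone resolves G, and a graph resolved by
  a single vertex is a path. Otherwise R contains some r \<notin> {u,v}, and replacing u by v
  in R gives another metric basis: v distinguishes u from every vertex except the second
  neighbour w of v, and r distinguishes u from w because d(r,u) = d(r,w) + 2.\<close>

lemma walk_betw_singleton: "x \<in> V \<Longrightarrow> walk_betw V E x [x] x"
  by (simp add: walk_betw_def is_walk_def)

lemma walk_betw_snoc:
  assumes "walk_betw V E x p y" "E y z" "z \<in> V"
  shows "walk_betw V E x (p @ [z]) z"
proof -
  have p: "p \<noteq> []" "last p = y" "\<And>i. Suc i < length p \<Longrightarrow> E (p ! i) (p ! Suc i)"
    using assms(1) by (auto simp: walk_betw_def is_walk_def)
  have "E ((p @ [z]) ! i) ((p @ [z]) ! Suc i)" if "Suc i < length (p @ [z])" for i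
  proof (cases "Suc i < length p")
    case True
    then show ?thesis using p(3) by (simp add: nth_append)
  next
    case False
    with that have "Suc i = length p" by simp
    with p(1,2) have "p ! i = y" by (metis diff_Suc_1 last_conv_nth)
    with \<open>Suc i = length p\<close> assms(2) show ?thesis by (simp add: nth_append)
  qed
  with assms show ?thesis by (auto simp: walk_betw_def is_walk_def)
qed

lemma walk_betw_take:
  assumes "walk_betw V E x p y" "k < length p"
  shows "walk_betw V E x (take (Suc k) p) (p ! k)"
proof -
  have "set (take (Suc k) p) \<subseteq> V"
    using assms(1) set_take_subset unfolding walk_betw_def is_walk_def by fast
  moreover have "last (take (Suc k) p) = p ! k"
    using assms(2) by (simp add: take_Suc_conv_app_nth)
  ultimately show ?thesis
    using assms by (auto simp: walk_betw_def is_walk_def)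
qed

lemma walk_betw_rev:
  assumes "simple_graph V E" "walk_betw V E x p y"
  shows "walk_betw V E y (rev p) x"
proof -
  have step: "\<And>i. Suc i < length p \<Longrightarrow> E (p ! i) (p ! Suc i)"
    using assms(2) by (auto simp: walk_betw_def is_walk_def)
  have "E (rev p ! i) (rev p ! Suc i)" if "Suc i < length p" for i
  proof -
    define j where "j = length p - Suc (Suc i)"
    have "Suc j < length p" "rev p ! i = p ! Suc j" "rev p ! Suc i = p ! j"
      using that by (simp_all add: j_def rev_nth Suc_diff_Suc)
    with step assms(1) show ?thesis by (auto simp: simple_graph_def)
  qed
  with assms(2) show ?thesis by (auto simp: walk_betw_def is_walk_def hd_rev last_rev)
qed

lemma metric_basis_if_card_le:
  assumes "metric_basis V E R" "resolving_set V E R'" "card R' \<le> card R"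
  shows "metric_basis V E R'"
proof -
  have "metric_dim V E \<le> card R'"
    unfolding metric_dim_def by (rule Least_le) (use assms(2) in blast)
  with assms show ?thesis by (simp add: metric_basis_def)
qed

locale connected_simple_graph =
  fixes V :: "'a set" and E :: "'a \<Rightarrow> 'a \<Rightarrow> bool"
  assumes simple: "simple_graph V E" and connected: "connected_graph V E"
begin

lemma finite_vertices: "finite V"
  using simple by (simp add: simple_graph_def)

lemma adjacent_in_V: "E x y \<Longrightarrow> x \<in> V \<and> y \<in> V"
  using simple by (simp add: simple_graph_def)

lemma adjacent_sym: "E x y \<Longrightarrow> E y x"
  using simple by (simp add: simple_graph_def)

lemma adjacent_irrefl: "\<not> E x x"
  using simple by (simp add: simple_graph_def)

lemma shortest_walk_exists:
  assumes "x \<in> V" "y \<in> V"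
  obtains p where "walk_betw V E x p y" "length p = Suc (dist V E x y)"
proof -
  obtain p where p: "walk_betw V E x p y"
    using connected assms by (auto simp: connected_graph_def)
  then have "length p = Suc (length p - 1)"
    by (cases p) (auto simp: walk_betw_def is_walk_def)
  with p have "\<exists>n p. walk_betw V E x p y \<and> length p = Suc n" by blast
  then have "\<exists>p. walk_betw V E x p y \<and> length p = Suc (dist V E x y)"
    unfolding dist_def by (rule LeastI_ex)
  with that show ?thesis by blast
qed

lemma dist_le_walk_length:
  assumes "walk_betw V E x p y" "length p = Suc n"
  shows "dist V E x y \<le> n"
  unfolding dist_def by (rule Least_le) (use assms in blast)

lemma dist_self [simp]: "x \<in> V \<Longrightarrow> dist V E x x = 0"
  using dist_le_walk_length[OF walk_betw_singleton] by simp

lemma dist_eq_0_iff: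
  assumes "x \<in> V" "y \<in> V"
  shows "dist V E x y = 0 \<longleftrightarrow> x = y"
proof
  assume "dist V E x y = 0"
  then obtain p where "walk_betw V E x p y" "length p = Suc 0"
    using shortest_walk_exists[OF assms] by metis
  then obtain z where "p = [z]" by (cases p) auto
  with \<open>walk_betw V E x p y\<close> show "x = y" by (auto simp: walk_betw_def)
qed (use assms in simp)

lemma dist_commute:
  assumes "x \<in> V" "y \<in> V"
  shows "dist V E x y = dist V E y x"
proof -
  have "dist V E b a \<le> dist V E a b" if ab: "a \<in> V" "b \<in> V" for a b
  proof -
    obtain p where "walk_betw V E a p b" "length p = Suc (dist V E a b)"
      using shortest_walk_exists[OF ab] by blast
    then show ?thesis
      using walk_betw_rev[OF simple] dist_le_walk_length by (metis length_rev)
  qed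
  with assms show ?thesis by (meson antisym)
qed

lemma dist_adjacent_le:
  assumes "x \<in> V" "E y z"
  shows "dist V E x z \<le> Suc (dist V E x y)"
proof -
  have "y \<in> V" using adjacent_in_V assms(2) by blast
  then obtain p where "walk_betw V E x p y" "length p = Suc (dist V E x y)"
    using shortest_walk_exists[OF assms(1)] by blast
  with walk_betw_snoc[of V E x p y z] assms adjacent_in_V show ?thesis
    using dist_le_walk_length by fastforce
qed

lemma dist_Suc_predecessor:
  assumes "x \<in> V" "z \<in> V" "dist V E x z = Suc k"
  obtains y where "E y z" "dist V E x y = k"
proof -
  obtain p where p: "walk_betw V E x p z" "length p = Suc (dist V E x z)"
    using shortest_walk_exists[OF assms(1,2)] .
  with assms(3) have len: "length p = Suc (Suc k)" by simp
  then have "p ! Suc k = last p"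
    by (metis diff_Suc_1 last_conv_nth list.size(3) nat.distinct(1))
  with p(1) have "p ! Suc k = z"
    by (simp add: walk_betw_def)
  moreover have "\<forall>i. Suc i < length p \<longrightarrow> E (p ! i) (p ! Suc i)"
    using p(1) by (simp add: walk_betw_def is_walk_def)
  ultimately have edge: "E (p ! k) z"
    using len by auto
  have "dist V E x (p ! k) \<le> k"
    using dist_le_walk_length[OF walk_betw_take[OF p(1)]] len by simp
  moreover have "k \<le> dist V E x (p ! k)"
    using dist_adjacent_le[OF assms(1) edge] assms(3) by simp
  ultimately show ?thesis
    using that edge by simp
qed

lemma dist_eq_1_iff:
  assumes "x \<in> V" "y \<in> V"
  shows "dist V E x y = 1 \<longleftrightarrow> E x y"
proof
  assume "dist V E x y = 1"
  then obtain z where z: "E z y" "dist V E x z = 0"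
    using dist_Suc_predecessor[OF assms, of 0] by auto
  then have "z = x"
    using dist_eq_0_iff[OF assms(1)] adjacent_in_V by blast
  with z show "E x y" by simp
next
  assume "E x y"
  then have "dist V E x y \<le> 1" "x \<noteq> y"
    using dist_adjacent_le[OF assms(1)] assms(1) adjacent_irrefl by fastforce+
  with dist_eq_0_iff[OF assms] show "dist V E x y = 1" by auto
qed

lemma pendant_neighbour_unique:
  assumes "pendant V E u" "E u v" "E u w"
  shows "w = v"
proof -
  obtain a where "neighbours V E u = {a}"
    using assms(1) card_1_singletonE by (auto simp: pendant_def degree_def)
  moreover have "v \<in> neighbours V E u" "w \<in> neighbours V E u"
    using assms(2,3) adjacent_in_V by (auto simp: neighbours_def)
  ultimately show ?thesis by simp
qed

lemma dist_to_pendant: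
  assumes "pendant V E u" "E u v" "x \<in> V" "x \<noteq> u"
  shows "dist V E x u = Suc (dist V E x v)"
proof -
  have "u \<in> V" using assms(2) adjacent_in_V by blast
  with assms(3,4) obtain k where k: "dist V E x u = Suc k"
    by (metis dist_eq_0_iff not0_implies_Suc)
  then obtain y where "E y u" "dist V E x y = k"
    using dist_Suc_predecessor[OF assms(3) \<open>u \<in> V\<close>] by blast
  moreover have "y = v"
    using pendant_neighbour_unique[OF assms(1,2)] adjacent_sym \<open>E y u\<close> by blast
  ultimately show ?thesis using k by simp
qed

lemma dist_from_pendant:
  assumes "pendant V E u" "E u v" "x \<in> V" "x \<noteq> u"
  shows "dist V E u x = Suc (dist V E v x)"
  using dist_to_pendant[OF assms] dist_commute adjacent_in_V assms(2,3) by metis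

lemma dist_to_pendant_through_other_neighbour:
  assumes "pendant V E u" "E u v" "neighbours V E v = {u, w}"
    and "r \<in> V" "r \<noteq> u" "r \<noteq> v"
  shows "dist V E r u = Suc (Suc (dist V E r w))"
proof -
  have "v \<in> V" using assms(2) adjacent_in_V by blast
  with assms(4,6) obtain k where k: "dist V E r v = Suc k"
    by (metis dist_eq_0_iff not0_implies_Suc)
  then obtain y where y: "E y v" "dist V E r y = k"
    using dist_Suc_predecessor[OF assms(4) \<open>v \<in> V\<close>] by blast
  have ru: "dist V E r u = Suc (Suc k)"
    using dist_to_pendant[OF assms(1,2,4,5)] k by simp
  have "y \<in> neighbours V E v"
    using y(1) adjacent_sym adjacent_in_V by (auto simp: neighbours_def)
  with assms(3) y(2) ru have "y = w" by auto
  with ru y(2) show ?thesis by simp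
qed

lemma pendant_resolves_as_neighbour:
  assumes "pendant V E u" "E u v" "x \<in> V" "y \<in> V" "x \<noteq> u" "y \<noteq> u"
  shows "dist V E u x = dist V E u y \<longleftrightarrow> dist V E v x = dist V E v y"
  using dist_from_pendant[OF assms(1,2)] assms(3-6) by simp

lemma resolving_set_vertices: "resolving_set V E V"
proof -
  have "dist V E x x \<noteq> dist V E x y" if "x \<in> V" "y \<in> V" "x \<noteq> y" for x y
    using that dist_eq_0_iff by simp
  then show ?thesis unfolding resolving_set_def by blast
qed

lemma metric_basis_exists: "\<exists>R. metric_basis V E R"
proof -
  have "\<exists>k R. resolving_set V E R \<and> card R = k"
    using resolving_set_vertices by blast
  then have "\<exists>R. resolving_set V E R \<and> card R = metric_dim V E"
    unfolding metric_dim_def by (rule LeastI_ex)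
  then show ?thesis by (simp add: metric_basis_def)
qed

lemma resolving_set_singleton_pendant:
  assumes "pendant V E u" "E u v" "resolving_set V E R" "R \<subseteq> {u, v}"
  shows "resolving_set V E {u}"
proof -
  have "u \<in> V" using assms(2) adjacent_in_V by blast
  have "dist V E u x \<noteq> dist V E u y" if xy: "x \<in> V" "y \<in> V" "x \<noteq> y" for x y
  proof (cases "x = u \<or> y = u")
    case True
    with xy \<open>u \<in> V\<close> dist_eq_0_iff show ?thesis by (metis dist_self)
  next
    case False
    obtain r where "r \<in> R" "dist V E r x \<noteq> dist V E r y"
      using assms(3) xy unfolding resolving_set_def by blast
    with assms(4) False pendant_resolves_as_neighbour[OF assms(1,2) xy(1,2)] show ?thesis
      by blast
  qed
  with \<open>u \<in> V\<close> show ?thesis unfolding resolving_set_def by blast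
qed

lemma resolving_set_replace_pendant:
  assumes "pendant V E u" "E u v" "degree V E v = 2" "resolving_set V E R"
    and "r \<in> R" "r \<noteq> u" "r \<noteq> v"
  shows "resolving_set V E (insert v (R - {u}))" (is "resolving_set V E ?R")
proof -
  have "u \<in> V" "v \<in> V" using assms(2) adjacent_in_V by auto
  have "u \<in> neighbours V E v"
    using assms(2) adjacent_sym \<open>u \<in> V\<close> by (simp add: neighbours_def)
  with assms(3) obtain w where w: "neighbours V E v = {u, w}"
    unfolding degree_def by (metis card_2_iff insert_commute insertE singletonD)
  have "r \<in> V" using assms(4,5) by (auto simp: resolving_set_def)
  have resolves_u: "\<exists>r'\<in>?R. dist V E r' u \<noteq> dist V E r' y" if "y \<in> V" "y \<noteq> u" for y
  proof (cases "E v y")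
    case True
    with w that have "y = w" by (auto simp: neighbours_def)
    with dist_to_pendant_through_other_neighbour[OF assms(1,2) w \<open>r \<in> V\<close> assms(6,7)]
    show ?thesis using assms(5,6) by (intro bexI[of _ r]) auto
  next
    case False
    moreover have "dist V E v u = 1"
      using dist_eq_1_iff \<open>u \<in> V\<close> \<open>v \<in> V\<close> assms(2) adjacent_sym by blast
    ultimately have "dist V E v u \<noteq> dist V E v y"
      using dist_eq_1_iff[OF \<open>v \<in> V\<close> that(1)] by simp
    then show ?thesis by blast
  qed
  have "\<exists>r'\<in>?R. dist V E r' x \<noteq> dist V E r' y"
    if xy: "x \<in> V" "y \<in> V" "x \<noteq> y" for x y
  proof (cases "x = u \<or> y = u")
    case True
    with resolves_u xy show ?thesis by (metis (no_types, lifting))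
  next
    case False
    obtain r' where "r' \<in> R" "dist V E r' x \<noteq> dist V E r' y"
      using assms(4) xy unfolding resolving_set_def by blast
    with False pendant_resolves_as_neighbour[OF assms(1,2) xy(1,2)] show ?thesis
      by (cases "r' = u") auto
  qed
  moreover have "?R \<subseteq> V" using assms(4) \<open>v \<in> V\<close> by (auto simp: resolving_set_def)
  ultimately show ?thesis unfolding resolving_set_def by blast
qed

lemma dist_image_downward_closed:
  assumes "u \<in> V" "x \<in> V" "j \<le> dist V E u x"
  shows "j \<in> dist V E u ` V"
  using assms(2,3)
proof (induction "dist V E u x" arbitrary: x)
  case 0
  then show ?case by (metis image_eqI le_zero_eq)
next
  case (Suc m)
  show ?case
  proof (cases "j = Suc m")
    case True
    with Suc.hyps(2) Suc.prems(1) show ?thesis by (metis image_eqI)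
  next
    case False
    obtain y where "E y x" "dist V E u y = m"
      using dist_Suc_predecessor[OF assms(1) Suc.prems(1) Suc.hyps(2)[symmetric]] .
    moreover have "j \<le> m" using False Suc.prems(2) Suc.hyps(2) by simp
    ultimately show ?thesis using Suc.hyps(1)[of y] adjacent_in_V by blast
  qed
qed

lemma dist_image_eq_atLeastLessThan:
  assumes "u \<in> V" "inj_on (dist V E u) V"
  shows "dist V E u ` V = {0..<card V}"
proof -
  have card_image_eq: "card (dist V E u ` V) = card V"
    using card_image[OF assms(2)] .
  have "dist V E u ` V \<subseteq> {0..<card V}"
  proof
    fix m assume "m \<in> dist V E u ` V"
    then obtain x where "x \<in> V" "m = dist V E u x" by blast
    then have "{0..m} \<subseteq> dist V E u ` V"
      using dist_image_downward_closed[OF assms(1)] by auto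
    then have "card {0..m} \<le> card V"
      using card_mono finite_imageI finite_vertices card_image_eq by metis
    then show "m \<in> {0..<card V}" by simp
  qed
  with card_image_eq show ?thesis
    using card_subset_eq[of "{0..<card V}"] by simp
qed

lemma path_graph_if_resolving_singleton:
  assumes "resolving_set V E {u}"
  shows "is_path_graph V E"
proof -
  let ?n = "card V"
  define f where "f = inv_into V (dist V E u)"
  have "u \<in> V" and inj: "inj_on (dist V E u) V"
    using assms unfolding resolving_set_def inj_on_def by auto
  have image: "dist V E u ` V = {0..<?n}"
    using dist_image_eq_atLeastLessThan[OF \<open>u \<in> V\<close> inj] .
  have bij: "bij_betw f {0..<?n} V"
    unfolding f_def using bij_betw_inv_into[of "dist V E u" V] inj image
    by (simp add: bij_betw_def)
  then have f_in_V: "f i \<in> V" if "i < ?n" for i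
    using that by (auto simp: bij_betw_def)
  have dist_f: "dist V E u (f i) = i" if "i < ?n" for i
    using that image by (simp add: f_def f_inv_into_f)
  have edge_Suc: "E (f (Suc j)) (f j)" if j: "Suc j < ?n" for j
  proof -
    obtain y where y: "E y (f (Suc j))" "dist V E u y = j"
      using dist_Suc_predecessor[OF \<open>u \<in> V\<close> f_in_V[OF j] dist_f[OF j]] .
    then have "y = f j"
      using adjacent_in_V inv_into_f_f[OF inj] f_def by metis
    with y(1) show ?thesis using adjacent_sym by blast
  qed
  have "E (f i) (f j) \<longleftrightarrow> i = Suc j \<or> j = Suc i" if ij: "i < ?n" "j < ?n" for i j
  proof
    assume e: "E (f i) (f j)"
    then have "i \<noteq> j" using adjacent_irrefl by blast
    moreover have "j \<le> Suc i" "i \<le> Suc j"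
      using dist_adjacent_le[OF \<open>u \<in> V\<close> e] dist_adjacent_le[OF \<open>u \<in> V\<close> adjacent_sym[OF e]]
        dist_f ij by simp_all
    ultimately show "i = Suc j \<or> j = Suc i" by auto
  next
    assume "i = Suc j \<or> j = Suc i"
    then show "E (f i) (f j)" using edge_Suc ij adjacent_sym by blast
  qed
  moreover have "?n \<ge> 1"
    using \<open>u \<in> V\<close> finite_vertices by (auto simp: Suc_le_eq card_gt_0_iff)
  ultimately show ?thesis
    unfolding is_path_graph_def using bij by blast
qed

end

theorem theorem4:
  fixes V :: "'a set" and E :: "'a \<Rightarrow> 'a \<Rightarrow> bool" and u v :: 'a
  assumes "simple_graph V E"
    and "connected_graph V E"
    and "\<not> is_path_graph V E"
    and "pendant V E u"
    and "E u v"
    and "cut_vertex V E v"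
    and "degree V E v = 2"
  shows "\<not> basis_forced V E u"
proof
  assume forced: "basis_forced V E u"
  interpret connected_simple_graph V E
    using assms(1,2) by unfold_locales
  obtain R where R: "metric_basis V E R"
    using metric_basis_exists by blast
  with forced have "u \<in> R" by (simp add: basis_forced_def)
  from R have resolving: "resolving_set V E R" by (simp add: metric_basis_def)
  show False
  proof (cases "R \<subseteq> {u, v}")
    case True
    with resolving have "resolving_set V E {u}"
      by (rule resolving_set_singleton_pendant[OF assms(4,5)])
    with assms(3) show False
      using path_graph_if_resolving_singleton by blast
  next
    case False
    then obtain r where "r \<in> R" "r \<noteq> u" "r \<noteq> v" by blast
    let ?R = "insert v (R - {u})"
    from resolving have "finite R"
      using finite_vertices finite_subset by (auto simp: resolving_set_def)
    with \<open>u \<in> R\<close> have "card ?R \<le> card R"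
      by (metis card_Suc_Diff1 card_insert_le_m1 diff_Suc_1 le_refl zero_less_Suc)
    moreover have "resolving_set V E ?R"
      using resolving_set_replace_pendant[OF assms(4,5,7) resolving] \<open>r \<in> R\<close> \<open>r \<noteq> u\<close> \<open>r \<noteq> v\<close>
      by blast
    ultimately have "metric_basis V E ?R"
      using metric_basis_if_card_le[OF R] by blast
    moreover have "u \<notin> ?R"
      using assms(5) adjacent_irrefl by auto
    ultimately show False
      using forced by (auto simp: basis_forced_def)
  qed
qed

end
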